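(* Let $C_0,C_1,C_2,\dots$ be the successive configurations of the weakly universal Turing machine WUTM(2,4) (defined in the context) started from a configuration $C_0$ whose tape is a weak tape $\dots w_lw_l\,\alpha_0\,x_0\,\beta_0\,w_rw_r\dots$. Let $M_0$ be a marking of UPN(14,29) that represents $C_0$. Then the run of UPN(14,29) from $M_0$ never halts, and there are indices $0=n_0<n_1<n_2<\cdots$ such that for every $k\ge 0$ the marking reached after $n_k$ firings represents $C_k$ (possibly after the insertion transitions $t_1$ or $t_2$ have fired). Moreover, for fixed $M_0$, $n_k=O(k\cdot 5^{k})$, and every place's marking during the first $n_k$ firings has $O(k)$ base-5 digits (space $O(k)$).
   Context: A deterministic inhibitor Petri net (DIPN) has places $p_1,\dots,p_m$ holding nonnegative integer numbers of tokens (the marking) and transitions $t_1,\dots,t_n$. Each pair (place $p$, transition $t$) carries an input value $w^-\in\{0,1,2,\dots\}\cup\{-1\}$ and an output value $w^+\ge 0$. Transition $t$ is firable iff every place with input value $w^->0$ holds at least $w^-$ tokens and every place with input value $-1$ (inhibitor arc) holds $0$ tokens. At each step the firable transition with the smallest index fires: it removes $w^-$ tokens from each place with $w^->0$ and adds $w^+$ tokens to each place (inhibitor arcs remove nothing). The net halts when no transition is firable. UPN(14,29) has places $p_1=X$, $p_2=U$, $p_3=L$, $p_4=R$, $p_5=\mathit{STEP}$, $p_6=\mathit{MOVE}$, $p_7=\mathit{RIGHT}$, $p_8=\mathit{MOVE1}$, $p_9,\dots,p_{14}$, and 29 transitions. Below, "$P\,a,b$" means input value $a$ and output value $b$ for place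 $P$; unlisted places have $0,0$. $t_1$: $L\,{-1},167$; $\mathit{STEP}\,1,1$. $t_2$: $R\,{-1},13596$; $\mathit{STEP}\,1,1$. $t_3$: $X\,4,2$; $U\,1,1$; $\mathit{STEP}\,1,0$; $\mathit{MOVE}\,0,1$; $\mathit{RIGHT}\,0,1$. $t_4$: $X\,4,4$; $\mathit{STEP}\,1,0$; $\mathit{MOVE}\,0,1$. $t_5$: $X\,3,1$; $U\,1,1$; $\mathit{STEP}\,1,0$; $\mathit{MOVE}\,0,1$; $\mathit{RIGHT}\,0,1$. $t_6$: $X\,3,4$; $\mathit{STEP}\,1,0$; $\mathit{MOVE}\,0,1$. $t_7$: $X\,2,3$; $U\,1,1$; $\mathit{STEP}\,1,0$; $\mathit{MOVE}\,0,1$. $t_8$: $X\,2,4$; $U\,0,1$; $\mathit{STEP}\,1,0$; $\mathit{MOVE}\,0,1$. $t_9$: $X\,1,4$; $U\,1,0$; $\mathit{STEP}\,1,0$; $\mathit{MOVE}\,0,1$; $\mathit{RIGHT}\,0,1$. $t_{10}$: $X\,1,3$; $\mathit{STEP}\,1,0$; $\mathit{MOVE}\,0,1$. $t_{11}$: $R\,1,0$; $\mathit{MOVE}\,1,1$; $\mathit{RIGHT}\,{-1},0$; $p_9\,0,5$. $t_{12}$: $L\,1,0$; $\mathit{MOVE}\,1,1$; $\mathit{RIGHT}\,1,1$; $p_9\,0,5$. $t_{13}$: $\mathit{MOVE}\,1,0$; $p_{10}\,0,1$. $t_{14}$: $R\,0,1$; $\mathit{RIGHT}\,{-1},0$; $p_9\,1,0$;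 $p_{10}\,1,1$. $t_{15}$: $L\,0,1$; $\mathit{RIGHT}\,1,1$; $p_9\,1,0$; $p_{10}\,1,1$. $t_{16}$: $p_{10}\,1,0$; $p_{11}\,0,1$. $t_{17}$: $X\,1,0$; $R\,0,1$; $\mathit{RIGHT}\,{-1},0$; $p_{11}\,1,1$. $t_{18}$: $X\,1,0$; $L\,0,1$; $\mathit{RIGHT}\,1,1$; $p_{11}\,1,1$. $t_{19}$: $\mathit{MOVE1}\,0,1$; $p_{11}\,1,0$. $t_{20}$: $R\,5,0$; $\mathit{RIGHT}\,1,1$; $\mathit{MOVE1}\,1,1$; $p_{14}\,0,1$. $t_{21}$: $L\,5,0$; $\mathit{RIGHT}\,{-1},0$; $\mathit{MOVE1}\,1,1$; $p_{14}\,0,1$. $t_{22}$: $\mathit{MOVE1}\,1,0$; $p_{12}\,0,1$. $t_{23}$: $X\,0,1$; $R\,1,0$; $\mathit{RIGHT}\,1,1$; $p_{12}\,1,1$. $t_{24}$: $X\,0,1$; $L\,1,0$; $\mathit{RIGHT}\,{-1},0$; $p_{12}\,1,1$. $t_{25}$: $p_{12}\,1,0$; $p_{13}\,0,1$. $t_{26}$: $R\,0,1$; $\mathit{RIGHT}\,1,1$; $p_{13}\,1,1$; $p_{14}\,1,0$. $t_{27}$: $L\,0,1$; $\mathit{RIGHT}\,{-1},0$; $p_{13}\,1,1$; $p_{14}\,1,0$. $t_{28}$: $\mathit{STEP}\,0,1$; $\mathit{RIGHT}\,1,0$; $p_{13}\,1,0$. $t_{29}$: $\mathit{STEP}\,0,1$;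 $p_{13}\,1,0$. WUTM(2,4) (Neary–Woods) has states $u_1,u_2$ with codes $s(u_1)=0$, $s(u_2)=1$, start state $u_1$, and tape alphabet $\Sigma=\{0,1,\bar 0,\bar 1\}$ with codes $s(0)=1$, $s(1)=2$, $s(\bar0)=3$, $s(\bar1)=4$. Its instructions (scanned symbol, state) $\mapsto$ (written symbol, move, new state) are: $(0,u_1)\mapsto(\bar0,\text{left},u_1)$; $(0,u_2)\mapsto(\bar1,\text{right},u_1)$; $(1,u_1)\mapsto(\bar1,\text{left},u_2)$; $(1,u_2)\mapsto(\bar0,\text{left},u_2)$; $(\bar0,u_1)\mapsto(\bar1,\text{left},u_1)$; $(\bar0,u_2)\mapsto(0,\text{right},u_2)$; $(\bar1,u_1)\mapsto(\bar1,\text{left},u_1)$; $(\bar1,u_2)\mapsto(1,\text{right},u_2)$. It has no halting state (every pair is defined). For a finite word $\alpha=y_1\cdots y_m$ (leftmost $y_1$) set $\lambda(\alpha)=\sum_{i=1}^m s(y_i)5^{m-i}$ and for $\beta=z_1\cdots z_n$ set $\rho(\beta)=\sum_{i=1}^n s(z_i)5^{i-1}$; empty words have code $0$. The blank words are $w_l=0\,0\,\bar0\,1$ (repeated infinitely to the left; $\lambda(w_l)=167$) and $w_r=0\,\bar1\,\bar0\,\bar0\,0\,\bar1$ (repeated infinitely to the right; $\rho(w_r)=13596$). A weak tape is a bi-infinite tape $\dots w_lw_l\,\alpha\,x\,\beta\,w_rw_r\dots$ with $\alpha,\beta$ finite and $x$ the scanned cell. A marking represents the configuration (state $u$, such a tape)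 if, for some such decomposition, $U=s(u)$, $X=s(x)$, $L=\lambda(\alpha)$, $R=\rho(\beta)$, $\mathit{STEP}=1$, and $\mathit{MOVE}=\mathit{RIGHT}=\mathit{MOVE1}=p_9=\dots=p_{14}=0$. *)

theory Defs
  imports Main
begin

text \<open>A transition is given by its input values (an integer, -1 meaning an inhibitor
  arc) and its output values, per place.\<close>

type_synonym marking = "nat \<Rightarrow> nat"
type_synonym transition = "(nat \<Rightarrow> int) \<times> (nat \<Rightarrow> nat)"

definition t_in :: "transition \<Rightarrow> nat \<Rightarrow> int" where "t_in t = fst t"
definition t_out :: "transition \<Rightarrow> nat \<Rightarrow> nat" where "t_out t = snd t"

definition firable :: "nat set \<Rightarrow> transition \<Rightarrow> marking \<Rightarrow> bool" where
  "firable P t M \<longleftrightarrow>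
     (\<forall>p\<in>P. (t_in t p > 0 \<longrightarrow> int (M p) \<ge> t_in t p) \<and> (t_in t p = -1 \<longrightarrow> M p = 0))"

definition fire :: "nat set \<Rightarrow> transition \<Rightarrow> marking \<Rightarrow> marking" where
  "fire P t M = (\<lambda>p. if p \<in> P
      then M p - (if t_in t p > 0 then nat (t_in t p) else 0) + t_out t p
      else M p)"

text \<open>One step: the firable transition with smallest index fires; None = halted.\<close>
definition dipn_step :: "nat set \<Rightarrow> transition list \<Rightarrow> marking \<Rightarrow> marking option" where
  "dipn_step P N M = (case find (\<lambda>t. firable P t M) N of
       None \<Rightarrow> None | Some t \<Rightarrow> Some (fire P t M))"

fun dipn_run :: "nat set \<Rightarrow> transition list \<Rightarrow> marking \<Rightarrow> nat \<Rightarrow> marking option" where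
  "dipn_run P N M 0 = Some M"
| "dipn_run P N M (Suc k) = (case dipn_run P N M k of None \<Rightarrow> None | Some M' \<Rightarrow> dipn_step P N M')"

definition mk_tr :: "(nat \<times> int \<times> nat) list \<Rightarrow> transition" where
  "mk_tr xs = ((\<lambda>p. case map_of xs p of None \<Rightarrow> 0 | Some ab \<Rightarrow> fst ab),
               (\<lambda>p. case map_of xs p of None \<Rightarrow> 0 | Some ab \<Rightarrow> snd ab))"

definition pX :: nat where "pX = 1"
definition pU :: nat where "pU = 2"
definition pL :: nat where "pL = 3"
definition pR :: nat where "pR = 4"
definition pSTEP :: nat where "pSTEP = 5"
definition pMOVE :: nat where "pMOVE = 6"
definition pRIGHT :: nat where "pRIGHT = 7"
definition pMOVE1 :: nat where "pMOVE1 = 8"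

definition upn_places :: "nat set" where "upn_places = {1..14}"

definition UPN :: "transition list" where
  "UPN = map mk_tr [
    [(pL,-1,167),(pSTEP,1,1)],
    [(pR,-1,13596),(pSTEP,1,1)],
    [(pX,4,2),(pU,1,1),(pSTEP,1,0),(pMOVE,0,1),(pRIGHT,0,1)],
    [(pX,4,4),(pSTEP,1,0),(pMOVE,0,1)],
    [(pX,3,1),(pU,1,1),(pSTEP,1,0),(pMOVE,0,1),(pRIGHT,0,1)],
    [(pX,3,4),(pSTEP,1,0),(pMOVE,0,1)],
    [(pX,2,3),(pU,1,1),(pSTEP,1,0),(pMOVE,0,1)],
    [(pX,2,4),(pU,0,1),(pSTEP,1,0),(pMOVE,0,1)],
    [(pX,1,4),(pU,1,0),(pSTEP,1,0),(pMOVE,0,1),(pRIGHT,0,1)],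
    [(pX,1,3),(pSTEP,1,0),(pMOVE,0,1)],
    [(pR,1,0),(pMOVE,1,1),(pRIGHT,-1,0),(9,0,5)],
    [(pL,1,0),(pMOVE,1,1),(pRIGHT,1,1),(9,0,5)],
    [(pMOVE,1,0),(10,0,1)],
    [(pR,0,1),(pRIGHT,-1,0),(9,1,0),(10,1,1)],
    [(pL,0,1),(pRIGHT,1,1),(9,1,0),(10,1,1)],
    [(10,1,0),(11,0,1)],
    [(pX,1,0),(pR,0,1),(pRIGHT,-1,0),(11,1,1)],
    [(pX,1,0),(pL,0,1),(pRIGHT,1,1),(11,1,1)],
    [(pMOVE1,0,1),(11,1,0)],
    [(pR,5,0),(pRIGHT,1,1),(pMOVE1,1,1),(14,0,1)],
    [(pL,5,0),(pRIGHT,-1,0),(pMOVE1,1,1),(14,0,1)],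
    [(pMOVE1,1,0),(12,0,1)],
    [(pX,0,1),(pR,1,0),(pRIGHT,1,1),(12,1,1)],
    [(pX,0,1),(pL,1,0),(pRIGHT,-1,0),(12,1,1)],
    [(12,1,0),(13,0,1)],
    [(pR,0,1),(pRIGHT,1,1),(13,1,1),(14,1,0)],
    [(pL,0,1),(pRIGHT,-1,0),(13,1,1),(14,1,0)],
    [(pSTEP,0,1),(pRIGHT,1,0),(13,1,0)],
    [(pSTEP,0,1),(13,1,0)]]"

datatype state = u1 | u2
datatype sym = S0 | S1 | S0b | S1b   \<comment> \<open>0, 1, 0-bar, 1-bar\<close>
datatype dir = Lft | Rgt

definition scode :: "state \<Rightarrow> nat" where
  "scode u = (case u of u1 \<Rightarrow> 0 | u2 \<Rightarrow> 1)"

definition ycode :: "sym \<Rightarrow> nat" where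
  "ycode y = (case y of S0 \<Rightarrow> 1 | S1 \<Rightarrow> 2 | S0b \<Rightarrow> 3 | S1b \<Rightarrow> 4)"

fun delta :: "sym \<Rightarrow> state \<Rightarrow> sym \<times> dir \<times> state" where
  "delta S0 u1 = (S0b, Lft, u1)"
| "delta S0 u2 = (S1b, Rgt, u1)"
| "delta S1 u1 = (S1b, Lft, u2)"
| "delta S1 u2 = (S0b, Lft, u2)"
| "delta S0b u1 = (S1b, Lft, u1)"
| "delta S0b u2 = (S0, Rgt, u2)"
| "delta S1b u1 = (S1b, Lft, u1)"
| "delta S1b u2 = (S1, Rgt, u2)"

type_synonym config = "state \<times> (int \<Rightarrow> sym) \<times> int"

fun tm_step :: "config \<Rightarrow> config" where
  "tm_step (u, T, h) = (case delta (T h) u of (w, d, u') \<Rightarrow>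
      (u', T(h := w), if d = Rgt then h + 1 else h - 1))"

definition w_l :: "sym list" where "w_l = [S0, S0, S0b, S1]"
definition w_r :: "sym list" where "w_r = [S0, S1b, S0b, S0b, S0, S1b]"

definition lam :: "sym list \<Rightarrow> nat" where
  "lam \<alpha> = (\<Sum>i<length \<alpha>. ycode (\<alpha> ! i) * 5 ^ (length \<alpha> - 1 - i))"

definition rho :: "sym list \<Rightarrow> nat" where
  "rho \<beta> = (\<Sum>i<length \<beta>. ycode (\<beta> ! i) * 5 ^ i)"

text \<open>The tape T with head at h is ... w_l w_l alpha x beta w_r w_r ...\<close>
definition weak_decomp :: "(int \<Rightarrow> sym) \<Rightarrow> int \<Rightarrow> sym list \<Rightarrow> sym \<Rightarrow> sym list \<Rightarrow> bool" where
  "weak_decomp T h \<alpha> x \<beta> \<longleftrightarrow>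
     T h = x
   \<and> (\<forall>i<length \<alpha>. T (h - int (length \<alpha>) + int i) = \<alpha> ! i)
   \<and> (\<forall>i<length \<beta>. T (h + 1 + int i) = \<beta> ! i)
   \<and> (\<forall>j::nat. T (h - int (length \<alpha>) - 1 - int j) = w_l ! (3 - j mod 4))
   \<and> (\<forall>j::nat. T (h + 1 + int (length \<beta>) + int j) = w_r ! (j mod 6))"

definition weak_tape :: "config \<Rightarrow> bool" where
  "weak_tape C \<longleftrightarrow> (case C of (u, T, h) \<Rightarrow> \<exists>\<alpha> x \<beta>. weak_decomp T h \<alpha> x \<beta>)"

definition represents :: "marking \<Rightarrow> config \<Rightarrow> bool" where
  "represents M C \<longleftrightarrow> (case C of (u, T, h) \<Rightarrow>
     \<exists>\<alpha> x \<beta>. weak_decomp T h \<alpha> x \<beta>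
       \<and> M pU = scode u \<and> M pX = ycode x \<and> M pL = lam \<alpha> \<and> M pR = rho \<beta>
       \<and> M pSTEP = 1 \<and> (\<forall>p\<in>{6..14}. M p = 0))"

text \<open>Number of base-5 digits of a natural number (0 has one digit).\<close>
fun digits5 :: "nat \<Rightarrow> nat" where
  "digits5 m = (if m < 5 then 1 else 1 + digits5 (m div 5))"

end

theory Submission
  imports Defs
begin

(* Write L = lam alpha and R = rho beta for the base-5 codes of the two halves of a weak tape.
   One step of WUTM(2,4) is one pass of UPN: an instruction transition t3..t10 rewrites X and U and
   records the direction on RIGHT; then, for a left move, R is multiplied by 5 and the written symbol
   added, while L is divided by 5 with the remainder, the newly scanned symbol, left in X (symmetrically
   for a right move).  Every firing of a pass shifts a bounded number of tokens, so a pass costs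
   O(L + R) firings and multiplies L + R by at most 5; the insertion transitions t1, t2 only add a
   constant when alpha or beta is empty.  Hence L + R = O(5^k) after k machine steps, which take
   O(k 5^k) firings, and since no firing adds more than 13596 tokens to a place, all markings up to
   then are 5^O(k), i.e. have O(k) base-5 digits.  Each pass fires at least once, so the run never
   halts. *)

section \<open>Iterating partial step functions\<close>

fun iter_opt :: "('a \<Rightarrow> 'a option) \<Rightarrow> nat \<Rightarrow> 'a \<Rightarrow> 'a option" where
  "iter_opt f 0 x = Some x"
| "iter_opt f (Suc n) x = Option.bind (f x) (iter_opt f n)"

lemma iter_opt_add: "iter_opt f (m + n) x = Option.bind (iter_opt f m x) (iter_opt f n)"
proof (induction m arbitrary: x)
  case (Suc m)
  then show ?case by (cases "f x") simp_all
qed simp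

lemma iter_opt_trans:
  "iter_opt f m x = Some y \<Longrightarrow> iter_opt f n y = Some z \<Longrightarrow> iter_opt f (m + n) x = Some z"
  by (simp add: iter_opt_add)

lemma iter_opt_None_mono: "iter_opt f m x = None \<Longrightarrow> m \<le> n \<Longrightarrow> iter_opt f n x = None"
  using iter_opt_add[of f m "n - m" x] by simp

lemma iter_opt_transfer_loop:
  assumes "\<And>k j. f (F (Suc k) j) = Some (F k (j + c))"
  shows "iter_opt f n (F n j) = Some (F 0 (j + c * n))"
  using assms by (induction n arbitrary: j) (simp_all add: algebra_simps)

lemma iter_opt_simulation:
  assumes "\<And>x. map_option g (f x) = f' (g x)"
  shows "map_option g (iter_opt f n x) = iter_opt f' n (g x)"
proof (induction n arbitrary: x)
  case (Suc n)
  have "f' (g x) = map_option g (f x)"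
    using assms by simp
  then show ?case using Suc by (cases "f x") simp_all
qed simp

lemma iter_opt_Suc_last: "iter_opt f (Suc n) x = Option.bind (iter_opt f n x) f"
proof (induction n arbitrary: x)
  case 0
  then show ?case by (cases "f x") simp_all
next
  case (Suc n)
  then show ?case by (cases "f x") simp_all
qed

lemma iter_opt_macro_steps:
  fixes f :: "'a \<Rightarrow> 'a option" and W :: "'a \<Rightarrow> nat" and g :: "'c \<Rightarrow> 'c"
  assumes start: "R x0 c0" and "1 \<le> b"
    and macro: "\<And>x c. R x c \<Longrightarrow> \<exists>m y. 0 < m \<and> m \<le> a * W x \<and> W y \<le> b * W x
      \<and> iter_opt f m x = Some y \<and> R y (g c)"
  shows "\<exists>n. n 0 = 0 \<and> strict_mono n
    \<and> (\<forall>k. \<exists>y. iter_opt f (n k) x0 = Some y \<and> R y ((g ^^ k) c0))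
    \<and> (\<forall>k. n k \<le> a * k * b ^ k * W x0)"
proof -
  define P where "P k s \<longleftrightarrow> (k = 0 \<longrightarrow> snd s = 0) \<and> R (fst s) ((g ^^ k) c0)
      \<and> iter_opt f (snd s) x0 = Some (fst s) \<and> W (fst s) \<le> b ^ k * W x0
      \<and> snd s \<le> a * k * b ^ k * W x0" for k s
  have "P 0 (x0, 0)"
    using start by (simp add: P_def)
  moreover have "\<exists>t. P (Suc k) t \<and> snd s < snd t" if "P k s" for k s
  proof -
    obtain x n where s: "s = (x, n)"
      by (cases s)
    then have R: "R x ((g ^^ k) c0)" and run: "iter_opt f n x0 = Some x"
      and Wx: "W x \<le> b ^ k * W x0" and n: "n \<le> a * k * b ^ k * W x0"
      using that by (simp_all add: P_def)
    obtain m y where "0 < m" and "m \<le> a * W x" and Wy: "W y \<le> b * W x"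
      and step: "iter_opt f m x = Some y" and "R y ((g ^^ Suc k) c0)"
      using macro[OF R] by auto
    have "n + m \<le> a * k * b ^ k * W x0 + a * (b ^ k * W x0)"
      using n \<open>m \<le> a * W x\<close> mult_le_mono2[OF Wx, of a] by linarith
    also have "\<dots> = a * Suc k * b ^ k * W x0"
      by (simp add: algebra_simps)
    also have "\<dots> \<le> a * Suc k * b ^ Suc k * W x0"
      using power_increasing[of k "Suc k" b] \<open>1 \<le> b\<close> by (simp add: mult_le_mono)
    finally have "n + m \<le> a * Suc k * b ^ Suc k * W x0" .
    moreover have "W y \<le> b * (b ^ k * W x0)"
      using Wy mult_le_mono2[OF Wx, of b] by (rule le_trans)
    ultimately have "P (Suc k) (y, n + m)"
      using \<open>R y ((g ^^ Suc k) c0)\<close> iter_opt_trans[OF run step] by (simp add: P_def mult.assoc)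
    then show ?thesis
      using \<open>0 < m\<close> s by (intro exI[of _ "(y, n + m)"]) simp
  qed
  ultimately obtain s where P: "\<And>k. P k (s k)" and incr: "\<And>k. snd (s k) < snd (s (Suc k))"
    using dependent_nat_choice[of P "\<lambda>k s t. snd s < snd t"] by blast
  have "strict_mono (snd \<circ> s)"
    using incr by (simp add: strict_mono_Suc_iff)
  then show ?thesis
    using P by (intro exI[of _ "snd \<circ> s"]) (auto simp: P_def)
qed

section \<open>Petri nets on token vectors\<close>

lemma dipn_run_eq_iter_opt: "dipn_run P N M k = iter_opt (dipn_step P N) k M"
  by (induction k) (simp_all add: iter_opt_Suc_last del: iter_opt.simps(2) split: option.split)

(* A marking of a net on the places 1..np as a token vector, place p at index p - 1; on explicit
   vectors simp can evaluate firing. *)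
definition token_vec :: "nat \<Rightarrow> marking \<Rightarrow> nat list" where
  "token_vec np M = map (\<lambda>i. M (Suc i)) [0..<np]"

definition arc_enabled :: "int \<Rightarrow> nat \<Rightarrow> bool" where
  "arc_enabled a m \<longleftrightarrow> (0 < a \<longrightarrow> a \<le> int m) \<and> (a = -1 \<longrightarrow> m = 0)"

definition arcs_firable :: "(nat \<times> int \<times> nat) list \<Rightarrow> nat list \<Rightarrow> bool" where
  "arcs_firable xs v \<longleftrightarrow> (\<forall>(p, a, b) \<in> set xs. arc_enabled a (v ! (p - 1)))"

(* nat (-1) = 0, so inhibitor arcs remove no token, as in fire. *)
fun arcs_fire_from :: "(nat \<times> int \<times> nat) list \<Rightarrow> nat \<Rightarrow> nat list \<Rightarrow> nat list" where
  "arcs_fire_from xs p [] = []"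
| "arcs_fire_from xs p (c # cs) =
     (case map_of xs p of None \<Rightarrow> c | Some (a, b) \<Rightarrow> c - nat a + b) # arcs_fire_from xs (p + 1) cs"

definition vec_step :: "(nat \<times> int \<times> nat) list list \<Rightarrow> nat list \<Rightarrow> nat list option" where
  "vec_step N v = map_option (\<lambda>xs. arcs_fire_from xs 1 v) (find (\<lambda>xs. arcs_firable xs v) N)"

lemma length_token_vec [simp]: "length (token_vec np M) = np"
  by (simp add: token_vec_def)

lemma nth_token_vec: "p \<in> {1..np} \<Longrightarrow> token_vec np M ! (p - 1) = M p"
  by (cases p) (auto simp: token_vec_def)

lemma length_arcs_fire_from [simp]: "length (arcs_fire_from xs p v) = length v"
  by (induction v arbitrary: p) simp_all

lemma nth_arcs_fire_from:
  "i < length v \<Longrightarrow> arcs_fire_from xs p v ! i =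
     (case map_of xs (p + i) of None \<Rightarrow> v ! i | Some (a, b) \<Rightarrow> v ! i - nat a + b)"
proof (induction v arbitrary: p i)
  case (Cons c cs)
  then show ?case by (cases i) (auto split: option.split)
qed simp

lemma t_in_mk_tr: "t_in (mk_tr xs) p = (case map_of xs p of None \<Rightarrow> 0 | Some (a, b) \<Rightarrow> a)"
  by (simp add: t_in_def mk_tr_def split: option.split)

lemma t_out_mk_tr: "t_out (mk_tr xs) p = (case map_of xs p of None \<Rightarrow> 0 | Some (a, b) \<Rightarrow> b)"
  by (simp add: t_out_def mk_tr_def split: option.split)

lemma firable_iff_arc_enabled: "firable P t M \<longleftrightarrow> (\<forall>p\<in>P. arc_enabled (t_in t p) (M p))"
  by (simp add: firable_def arc_enabled_def)

lemma firable_mk_tr_iff: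
  assumes "distinct (map fst xs)" and "fst ` set xs \<subseteq> P"
  shows "firable P (mk_tr xs) M \<longleftrightarrow> (\<forall>(p, a, b) \<in> set xs. arc_enabled a (M p))"
  unfolding firable_iff_arc_enabled
proof
  assume "\<forall>p\<in>P. arc_enabled (t_in (mk_tr xs) p) (M p)"
  moreover have "p \<in> P" and "t_in (mk_tr xs) p = a" if "(p, a, b) \<in> set xs" for p a b
    using assms that by (force simp: t_in_mk_tr map_of_is_SomeI)+
  ultimately show "\<forall>(p, a, b) \<in> set xs. arc_enabled a (M p)"
    by fastforce
next
  assume arcs: "\<forall>(p, a, b) \<in> set xs. arc_enabled a (M p)"
  show "\<forall>p\<in>P. arc_enabled (t_in (mk_tr xs) p) (M p)"
  proof
    fix p
    show "arc_enabled (t_in (mk_tr xs) p) (M p)"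
    proof (cases "map_of xs p")
      case None
      then show ?thesis by (simp add: t_in_mk_tr arc_enabled_def)
    next
      case (Some ab)
      then show ?thesis
        using arcs map_of_SomeD[of xs p ab] by (cases ab) (auto simp: t_in_mk_tr)
    qed
  qed
qed

lemma firable_mk_tr_iff_arcs_firable:
  assumes "distinct (map fst xs)" and "fst ` set xs \<subseteq> {1..np}"
  shows "firable {1..np} (mk_tr xs) M \<longleftrightarrow> arcs_firable xs (token_vec np M)"
proof -
  have "token_vec np M ! (p - 1) = M p" if "(p, a, b) \<in> set xs" for p a b
    using assms(2) that by (intro nth_token_vec) force
  then show ?thesis
    unfolding firable_mk_tr_iff[OF assms] arcs_firable_def by auto
qed

lemma token_vec_fire_mk_tr:
  "token_vec np (fire {1..np} (mk_tr xs) M) = arcs_fire_from xs 1 (token_vec np M)"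
proof (rule nth_equalityI)
  fix i assume "i < length (token_vec np (fire {1..np} (mk_tr xs) M))"
  then have i: "i < np" by simp
  have "(if 0 < a then nat a else 0) = nat a" for a :: int by simp
  then show "token_vec np (fire {1..np} (mk_tr xs) M) ! i = arcs_fire_from xs 1 (token_vec np M) ! i"
    using i by (simp add: token_vec_def nth_arcs_fire_from fire_def t_in_mk_tr t_out_mk_tr split: option.split)
qed simp

lemma token_vec_dipn_step:
  assumes "\<forall>xs\<in>set N. distinct (map fst xs) \<and> fst ` set xs \<subseteq> {1..np}"
  shows "map_option (token_vec np) (dipn_step {1..np} (map mk_tr N) M) = vec_step N (token_vec np M)"
proof -
  have "find (\<lambda>t. firable {1..np} t M) (map mk_tr N) =
      map_option mk_tr (find (\<lambda>xs. firable {1..np} (mk_tr xs) M) N)"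
    by (induction N) simp_all
  also have "\<dots> = map_option mk_tr (find (\<lambda>xs. arcs_firable xs (token_vec np M)) N)"
    using assms by (intro arg_cong[where f = "map_option mk_tr"] find_cong)
      (metis firable_mk_tr_iff_arcs_firable)+
  finally have "find (\<lambda>t. firable {1..np} t M) (map mk_tr N) =
      map_option mk_tr (find (\<lambda>xs. arcs_firable xs (token_vec np M)) N)" .
  then show ?thesis
    by (cases "find (\<lambda>xs. arcs_firable xs (token_vec np M)) N")
      (simp_all add: dipn_step_def vec_step_def token_vec_fire_mk_tr[simplified])
qed

lemma token_vec_dipn_run:
  assumes "\<forall>xs\<in>set N. distinct (map fst xs) \<and> fst ` set xs \<subseteq> {1..np}"
  shows "map_option (token_vec np) (dipn_run {1..np} (map mk_tr N) M k)
    = iter_opt (vec_step N) k (token_vec np M)"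
  unfolding dipn_run_eq_iter_opt by (rule iter_opt_simulation) (rule token_vec_dipn_step[OF assms])

lemma t_out_mk_tr_le: "\<forall>(p, a, b) \<in> set xs. b \<le> c \<Longrightarrow> t_out (mk_tr xs) p \<le> c"
  by (auto simp: t_out_mk_tr dest: map_of_SomeD split: option.split)

lemma dipn_step_le:
  assumes "\<forall>t\<in>set N. \<forall>p. t_out t p \<le> c" and "dipn_step P N M = Some M'"
  shows "M' p \<le> M p + c"
proof -
  obtain t where "find (\<lambda>t. firable P t M) N = Some t" and "M' = fire P t M"
    using assms(2) by (auto simp: dipn_step_def split: option.splits)
  then have "t \<in> set N" and "M' = fire P t M"
    by (auto simp: find_Some_iff)
  then have "M' p \<le> M p + t_out t p"
    by (simp add: fire_def)
  moreover have "t_out t p \<le> c"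
    using assms(1) \<open>t \<in> set N\<close> by blast
  ultimately show ?thesis
    by linarith
qed

lemma dipn_run_le:
  assumes "\<forall>t\<in>set N. \<forall>p. t_out t p \<le> c" and "dipn_run P N M j = Some M'"
  shows "M' p \<le> M p + c * j"
  using assms(2)
proof (induction j arbitrary: M')
  case (Suc j)
  then obtain M'' where "dipn_run P N M j = Some M''" and "dipn_step P N M'' = Some M'"
    by (auto split: option.splits)
  then show ?case
    using Suc.IH[of M''] dipn_step_le[OF assms(1), of P M'' M' p] by simp
qed simp

definition upn_arcs :: "(nat \<times> int \<times> nat) list list" where
  "upn_arcs = [
    [(pL,-1,167),(pSTEP,1,1)],
    [(pR,-1,13596),(pSTEP,1,1)],
    [(pX,4,2),(pU,1,1),(pSTEP,1,0),(pMOVE,0,1),(pRIGHT,0,1)],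
    [(pX,4,4),(pSTEP,1,0),(pMOVE,0,1)],
    [(pX,3,1),(pU,1,1),(pSTEP,1,0),(pMOVE,0,1),(pRIGHT,0,1)],
    [(pX,3,4),(pSTEP,1,0),(pMOVE,0,1)],
    [(pX,2,3),(pU,1,1),(pSTEP,1,0),(pMOVE,0,1)],
    [(pX,2,4),(pU,0,1),(pSTEP,1,0),(pMOVE,0,1)],
    [(pX,1,4),(pU,1,0),(pSTEP,1,0),(pMOVE,0,1),(pRIGHT,0,1)],
    [(pX,1,3),(pSTEP,1,0),(pMOVE,0,1)],
    [(pR,1,0),(pMOVE,1,1),(pRIGHT,-1,0),(9,0,5)],
    [(pL,1,0),(pMOVE,1,1),(pRIGHT,1,1),(9,0,5)],
    [(pMOVE,1,0),(10,0,1)],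
    [(pR,0,1),(pRIGHT,-1,0),(9,1,0),(10,1,1)],
    [(pL,0,1),(pRIGHT,1,1),(9,1,0),(10,1,1)],
    [(10,1,0),(11,0,1)],
    [(pX,1,0),(pR,0,1),(pRIGHT,-1,0),(11,1,1)],
    [(pX,1,0),(pL,0,1),(pRIGHT,1,1),(11,1,1)],
    [(pMOVE1,0,1),(11,1,0)],
    [(pR,5,0),(pRIGHT,1,1),(pMOVE1,1,1),(14,0,1)],
    [(pL,5,0),(pRIGHT,-1,0),(pMOVE1,1,1),(14,0,1)],
    [(pMOVE1,1,0),(12,0,1)],
    [(pX,0,1),(pR,1,0),(pRIGHT,1,1),(12,1,1)],
    [(pX,0,1),(pL,1,0),(pRIGHT,-1,0),(12,1,1)],
    [(12,1,0),(13,0,1)],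
    [(pR,0,1),(pRIGHT,1,1),(13,1,1),(14,1,0)],
    [(pL,0,1),(pRIGHT,-1,0),(13,1,1),(14,1,0)],
    [(pSTEP,0,1),(pRIGHT,1,0),(13,1,0)],
    [(pSTEP,0,1),(13,1,0)]]"

lemma UPN_eq_map_mk_tr: "UPN = map mk_tr upn_arcs"
  by (simp add: UPN_def upn_arcs_def)

lemma upn_arcs_wf: "\<forall>xs\<in>set upn_arcs. distinct (map fst xs) \<and> fst ` set xs \<subseteq> {1..14}"
  by (simp add: upn_arcs_def pX_def pU_def pL_def pR_def pSTEP_def pMOVE_def pRIGHT_def pMOVE1_def)

lemma UPN_t_out_le: "\<forall>t\<in>set UPN. \<forall>p. t_out t p \<le> 13596"
proof -
  have "\<forall>xs\<in>set upn_arcs. \<forall>(p, a, b) \<in> set xs. b \<le> 13596"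
    by (simp add: upn_arcs_def)
  then show ?thesis
    unfolding UPN_eq_map_mk_tr by (auto intro: t_out_mk_tr_le)
qed

lemma token_vec_dipn_run_UPN:
  "map_option (token_vec 14) (dipn_run upn_places UPN M k)
    = iter_opt (vec_step upn_arcs) k (token_vec 14 M)"
  using token_vec_dipn_run[OF upn_arcs_wf] by (simp add: UPN_eq_map_mk_tr upn_places_def)

definition upn_reaches :: "nat list \<Rightarrow> nat \<Rightarrow> nat list \<Rightarrow> bool" where
  "upn_reaches v n v' \<longleftrightarrow> iter_opt (vec_step upn_arcs) n v = Some v'"

lemma upn_reaches_0 [simp]: "upn_reaches v 0 v' \<longleftrightarrow> v' = v"
  by (auto simp: upn_reaches_def)

lemma upn_reaches_Suc_0 [simp]: "upn_reaches v (Suc 0) v' \<longleftrightarrow> vec_step upn_arcs v = Some v'"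
  by (cases "vec_step upn_arcs v") (auto simp: upn_reaches_def)

lemma upn_reaches_trans [trans]:
  "upn_reaches v m v' \<Longrightarrow> upn_reaches v' n v'' \<Longrightarrow> upn_reaches v (m + n) v''"
  unfolding upn_reaches_def by (rule iter_opt_trans)

lemma upn_reaches_loop:
  assumes "\<And>k j. vec_step upn_arcs (F (Suc k) j) = Some (F k (j + c))"
  shows "upn_reaches (F n j) n (F 0 (j + c * n))"
  unfolding upn_reaches_def using assms by (rule iter_opt_transfer_loop)

lemmas upn_vec_step_simps = vec_step_def upn_arcs_def arcs_firable_def arc_enabled_def
  pX_def pU_def pL_def pR_def pSTEP_def pMOVE_def pRIGHT_def pMOVE1_def

(* The pass for a left move (no token on RIGHT): R is multiplied by 5 via p9 and X is added to it,
   then L is divided by 5, quotient via p14 and remainder into X. *)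
lemma upn_reaches_move_left:
  assumes "m < 5"
  shows "upn_reaches [w,u,5*q+m,r,0,1,0,0,0,0,0,0,0,0] (6*r + w + 2*q + m + 6)
     [m, u, q, 5*r + w, 1,0,0,0,0,0,0,0,0,0]"
proof -
  have "upn_reaches [w,u,5*q+m,r,0,1,0,0,0,0,0,0,0,0] r [w,u,5*q+m,0,0,1,0,0,5*r,0,0,0,0,0]"
    using upn_reaches_loop[of "\<lambda>k j. [w,u,5*q+m,k,0,1,0,0,j,0,0,0,0,0]" 5 r 0]
    by (simp add: upn_vec_step_simps)
  also have "upn_reaches \<dots> 1 [w,u,5*q+m,0,0,0,0,0,5*r,1,0,0,0,0]"
    by (simp add: upn_vec_step_simps)
  also have "upn_reaches \<dots> (5*r) [w,u,5*q+m,5*r,0,0,0,0,0,1,0,0,0,0]"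
    using upn_reaches_loop[of "\<lambda>k j. [w,u,5*q+m,j,0,0,0,0,k,1,0,0,0,0]" 1 "5*r" 0]
    by (simp add: upn_vec_step_simps)
  also have "upn_reaches \<dots> 1 [w,u,5*q+m,5*r,0,0,0,0,0,0,1,0,0,0]"
    by (simp add: upn_vec_step_simps)
  also have "upn_reaches \<dots> w [0,u,5*q+m,5*r+w,0,0,0,0,0,0,1,0,0,0]"
    using upn_reaches_loop[of "\<lambda>k j. [k,u,5*q+m,j,0,0,0,0,0,0,1,0,0,0]" 1 w "5*r"]
    by (simp add: upn_vec_step_simps)
  also have "upn_reaches \<dots> 1 [0,u,5*q+m,5*r+w,0,0,0,1,0,0,0,0,0,0]"
    by (simp add: upn_vec_step_simps)
  also have "upn_reaches \<dots> q [0,u,m,5*r+w,0,0,0,1,0,0,0,0,0,q]"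
    using upn_reaches_loop[of "\<lambda>k j. [0,u,5*k + m,5*r+w,0,0,0,1,0,0,0,0,0,j]" 1 q 0]
    by (simp add: upn_vec_step_simps)
  also have "upn_reaches \<dots> 1 [0,u,m,5*r+w,0,0,0,0,0,0,0,1,0,q]"
    using assms by (simp add: upn_vec_step_simps)
  also have "upn_reaches \<dots> m [m,u,0,5*r+w,0,0,0,0,0,0,0,1,0,q]"
    using upn_reaches_loop[of "\<lambda>k j. [j,u,k,5*r+w,0,0,0,0,0,0,0,1,0,q]" 1 m 0]
    by (simp add: upn_vec_step_simps)
  also have "upn_reaches \<dots> 1 [m,u,0,5*r+w,0,0,0,0,0,0,0,0,1,q]"
    by (simp add: upn_vec_step_simps)
  also have "upn_reaches \<dots> q [m,u,q,5*r+w,0,0,0,0,0,0,0,0,1,0]"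
    using upn_reaches_loop[of "\<lambda>k j. [m,u,j,5*r+w,0,0,0,0,0,0,0,0,1,k]" 1 q 0]
    by (simp add: upn_vec_step_simps)
  also have "upn_reaches \<dots> 1 [m,u,q,5*r+w,1,0,0,0,0,0,0,0,0,0]"
    by (simp add: upn_vec_step_simps)
  finally show ?thesis
    by (simp add: algebra_simps numeral_eq_Suc)
qed

(* The mirror image, selected by the token on RIGHT. *)
lemma upn_reaches_move_right:
  assumes "m < 5"
  shows "upn_reaches [w,u,l,5*q+m,0,1,1,0,0,0,0,0,0,0] (6*l + w + 2*q + m + 6)
     [m, u, 5*l + w, q, 1,0,0,0,0,0,0,0,0,0]"
proof -
  have "upn_reaches [w,u,l,5*q+m,0,1,1,0,0,0,0,0,0,0] l [w,u,0,5*q+m,0,1,1,0,5*l,0,0,0,0,0]"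
    using upn_reaches_loop[of "\<lambda>k j. [w,u,k,5*q+m,0,1,1,0,j,0,0,0,0,0]" 5 l 0]
    by (simp add: upn_vec_step_simps)
  also have "upn_reaches \<dots> 1 [w,u,0,5*q+m,0,0,1,0,5*l,1,0,0,0,0]"
    by (simp add: upn_vec_step_simps)
  also have "upn_reaches \<dots> (5*l) [w,u,5*l,5*q+m,0,0,1,0,0,1,0,0,0,0]"
    using upn_reaches_loop[of "\<lambda>k j. [w,u,j,5*q+m,0,0,1,0,k,1,0,0,0,0]" 1 "5*l" 0]
    by (simp add: upn_vec_step_simps)
  also have "upn_reaches \<dots> 1 [w,u,5*l,5*q+m,0,0,1,0,0,0,1,0,0,0]"
    by (simp add: upn_vec_step_simps)
  also have "upn_reaches \<dots> w [0,u,5*l+w,5*q+m,0,0,1,0,0,0,1,0,0,0]"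
    using upn_reaches_loop[of "\<lambda>k j. [k,u,j,5*q+m,0,0,1,0,0,0,1,0,0,0]" 1 w "5*l"]
    by (simp add: upn_vec_step_simps)
  also have "upn_reaches \<dots> 1 [0,u,5*l+w,5*q+m,0,0,1,1,0,0,0,0,0,0]"
    by (simp add: upn_vec_step_simps)
  also have "upn_reaches \<dots> q [0,u,5*l+w,m,0,0,1,1,0,0,0,0,0,q]"
    using upn_reaches_loop[of "\<lambda>k j. [0,u,5*l+w,5*k + m,0,0,1,1,0,0,0,0,0,j]" 1 q 0]
    by (simp add: upn_vec_step_simps)
  also have "upn_reaches \<dots> 1 [0,u,5*l+w,m,0,0,1,0,0,0,0,1,0,q]"
    using assms by (simp add: upn_vec_step_simps)
  also have "upn_reaches \<dots> m [m,u,5*l+w,0,0,0,1,0,0,0,0,1,0,q]"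
    using upn_reaches_loop[of "\<lambda>k j. [j,u,5*l+w,k,0,0,1,0,0,0,0,1,0,q]" 1 m 0]
    by (simp add: upn_vec_step_simps)
  also have "upn_reaches \<dots> 1 [m,u,5*l+w,0,0,0,1,0,0,0,0,0,1,q]"
    by (simp add: upn_vec_step_simps)
  also have "upn_reaches \<dots> q [m,u,5*l+w,q,0,0,1,0,0,0,0,0,1,0]"
    using upn_reaches_loop[of "\<lambda>k j. [m,u,5*l+w,j,0,0,1,0,0,0,0,0,1,k]" 1 q 0]
    by (simp add: upn_vec_step_simps)
  also have "upn_reaches \<dots> 1 [m,u,5*l+w,q,1,0,0,0,0,0,0,0,0,0]"
    by (simp add: upn_vec_step_simps)
  finally show ?thesis
    by (simp add: algebra_simps numeral_eq_Suc)
qed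

section \<open>Tape encodings\<close>

lemma ycode_pos: "0 < ycode y"
  by (cases y) (simp_all add: ycode_def)

lemma ycode_le_4: "ycode y \<le> 4"
  by (cases y) (simp_all add: ycode_def)

lemma lam_Nil [simp]: "lam [] = 0"
  by (simp add: lam_def)

lemma rho_Nil [simp]: "rho [] = 0"
  by (simp add: rho_def)

lemma lam_snoc: "lam (\<alpha> @ [a]) = 5 * lam \<alpha> + ycode a"
proof -
  let ?n = "length \<alpha>"
  have "lam (\<alpha> @ [a]) = (\<Sum>i<?n. ycode (\<alpha> ! i) * 5 ^ (?n - i)) + ycode a"
    by (simp add: lam_def nth_append)
  also have "(\<Sum>i<?n. ycode (\<alpha> ! i) * 5 ^ (?n - i)) = (\<Sum>i<?n. 5 * (ycode (\<alpha> ! i) * 5 ^ (?n - 1 - i)))"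
  proof (rule sum.cong)
    fix i assume "i \<in> {..<?n}"
    then have "?n - i = Suc (?n - 1 - i)" by auto
    then show "ycode (\<alpha> ! i) * 5 ^ (?n - i) = 5 * (ycode (\<alpha> ! i) * 5 ^ (?n - 1 - i))" by simp
  qed simp
  also have "\<dots> = 5 * lam \<alpha>"
    by (simp add: lam_def sum_distrib_left)
  finally show ?thesis .
qed

lemma rho_Cons: "rho (b # \<beta>) = ycode b + 5 * rho \<beta>"
  unfolding rho_def
  by (simp add: sum.lessThan_Suc_shift sum_distrib_left mult.commute mult.left_commute del: sum.lessThan_Suc)

lemma lam_eq_0_iff: "lam \<alpha> = 0 \<longleftrightarrow> \<alpha> = []"
  by (cases \<alpha> rule: rev_cases) (simp_all add: lam_snoc ycode_pos)

lemma rho_eq_0_iff: "rho \<beta> = 0 \<longleftrightarrow> \<beta> = []"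
  by (cases \<beta>) (simp_all add: rho_Cons ycode_pos)

lemma lam_w_l: "lam w_l = 167"
  by (simp add: lam_def w_l_def ycode_def lessThan_nat_numeral)

lemma rho_w_r: "rho w_r = 13596"
  by (simp add: rho_def w_r_def ycode_def lessThan_nat_numeral)

lemma weak_decomp_expose_w_l:
  assumes "weak_decomp T h [] x \<beta>"
  shows "weak_decomp T h w_l x \<beta>"
proof -
  have blank: "T (h - 1 - int j) = w_l ! (3 - j mod 4)" for j
    using assms by (simp add: weak_decomp_def)
  have "T (h - 4 + int i) = w_l ! i" if "i < 4" for i
    using blank[of "3 - i"] that by (simp add: algebra_simps of_nat_diff)
  moreover have "T (h - 4 - 1 - int j) = w_l ! (3 - j mod 4)" for j
    using blank[of "j + 4"] by (simp add: algebra_simps)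
  ultimately show ?thesis
    using assms by (simp add: weak_decomp_def w_l_def)
qed

lemma weak_decomp_expose_w_r:
  assumes "weak_decomp T h \<alpha> x []"
  shows "weak_decomp T h \<alpha> x w_r"
proof -
  have blank: "T (h + 1 + int j) = w_r ! (j mod 6)" for j
    using assms by (simp add: weak_decomp_def)
  have "T (h + 1 + int i) = w_r ! i" if "i < 6" for i
    using blank[of i] that by simp
  moreover have "T (h + 1 + 6 + int j) = w_r ! (j mod 6)" for j
    using blank[of "j + 6"] by (simp add: algebra_simps)
  ultimately show ?thesis
    using assms by (simp add: weak_decomp_def w_r_def)
qed

lemma weak_decomp_move_left:
  assumes "weak_decomp T h (\<alpha> @ [a]) x \<beta>"
  shows "weak_decomp (T(h := w)) (h - 1) \<alpha> a (w # \<beta>)"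
proof -
  let ?n = "length \<alpha>"
  have left: "T (h - 1 - int ?n + int i) = (\<alpha> @ [a]) ! i" if "i \<le> ?n" for i
    using assms that by (auto simp: weak_decomp_def algebra_simps)
  have right: "T (h + 1 + int i) = \<beta> ! i" if "i < length \<beta>" for i
    using assms that by (simp add: weak_decomp_def)
  have "T (h - 1 - int ?n - 1 - int j) = w_l ! (3 - j mod 4)" for j
    using assms by (simp add: weak_decomp_def algebra_simps)
  moreover have "T (h + 1 + int (length \<beta>) + int j) = w_r ! (j mod 6)" for j
    using assms by (simp add: weak_decomp_def)
  moreover have "(T(h := w)) (h + int i) = (w # \<beta>) ! i" if "i < Suc (length \<beta>)" for i
    using that right[of "i - 1"] by (cases i) (simp_all add: algebra_simps)
  moreover have "T (h - 1) = a"
    using left[of ?n] by simp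
  ultimately show ?thesis
    using left by (simp add: weak_decomp_def nth_append algebra_simps)
qed

lemma weak_decomp_move_right:
  assumes "weak_decomp T h \<alpha> x (b # \<beta>)"
  shows "weak_decomp (T(h := w)) (h + 1) (\<alpha> @ [w]) b \<beta>"
proof -
  let ?n = "length \<alpha>"
  have left: "T (h - int ?n + int i) = \<alpha> ! i" if "i < ?n" for i
    using assms that by (simp add: weak_decomp_def)
  have right: "T (h + 1 + int i) = (b # \<beta>) ! i" if "i \<le> length \<beta>" for i
    using assms that by (simp add: weak_decomp_def)
  have "T (h - int ?n - 1 - int j) = w_l ! (3 - j mod 4)" for j
    using assms by (simp add: weak_decomp_def)
  moreover have "T (h + 2 + int (length \<beta>) + int j) = w_r ! (j mod 6)" for j
    using assms by (simp add: weak_decomp_def algebra_simps)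
  moreover have "(T(h := w)) (h - int ?n + int i) = (\<alpha> @ [w]) ! i" if "i < Suc ?n" for i
    using that left[of i] by (cases "i = ?n") (simp_all add: nth_append)
  moreover have "T (h + 2 + int i) = \<beta> ! i" if "i < length \<beta>" for i
    using that right[of "Suc i"] by (simp add: algebra_simps)
  ultimately show ?thesis
    using right[of 0] by (simp add: weak_decomp_def algebra_simps)
qed

section \<open>One machine step\<close>

definition tape_vec :: "state \<Rightarrow> sym list \<Rightarrow> sym \<Rightarrow> sym list \<Rightarrow> nat list" where
  "tape_vec u \<alpha> x \<beta> = [ycode x, scode u, lam \<alpha>, rho \<beta>, 1, 0, 0, 0, 0, 0, 0, 0, 0, 0]"

definition vec_represents :: "nat list \<Rightarrow> config \<Rightarrow> bool" where
  "vec_represents v C \<longleftrightarrow>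
     (case C of (u, T, h) \<Rightarrow> \<exists>\<alpha> x \<beta>. weak_decomp T h \<alpha> x \<beta> \<and> v = tape_vec u \<alpha> x \<beta>)"

lemma represents_iff_vec_represents: "represents M C \<longleftrightarrow> vec_represents (token_vec 14 M) C"
proof -
  have "token_vec 14 M = [M 1, M 2, M 3, M 4, M 5, M 6, M 7, M 8, M 9, M 10, M 11, M 12, M 13, M 14]"
    by (simp add: token_vec_def upt_rec numeral_eq_Suc)
  moreover have "{6..14::nat} = {6, 7, 8, 9, 10, 11, 12, 13, 14}"
    by auto
  ultimately show ?thesis
    by (auto simp: represents_def vec_represents_def tape_vec_def
        pX_def pU_def pL_def pR_def pSTEP_def split: prod.splits)
qed

(* With alpha, beta nonempty, L and R are positive, which disables the insertion transitions t1, t2. *)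
lemma upn_reaches_execute:
  assumes "\<alpha> \<noteq> []" and "\<beta> \<noteq> []" and "delta x u = (w, d, u')"
  shows "upn_reaches (tape_vec u \<alpha> x \<beta>) 1
    [ycode w, scode u', lam \<alpha>, rho \<beta>, 0, 1, if d = Rgt then 1 else 0, 0, 0, 0, 0, 0, 0, 0]"
  using assms
  by (cases x; cases u) (auto simp: upn_vec_step_simps tape_vec_def ycode_def scode_def lam_eq_0_iff rho_eq_0_iff)

lemma upn_reaches_tm_step_left:
  assumes "delta x u = (w, Lft, u')" and "\<beta> \<noteq> []"
  shows "upn_reaches (tape_vec u (\<alpha> @ [a]) x \<beta>) (6 * rho \<beta> + ycode w + 2 * lam \<alpha> + ycode a + 7)
    (tape_vec u' \<alpha> a (w # \<beta>))"
proof -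
  have "upn_reaches (tape_vec u (\<alpha> @ [a]) x \<beta>) 1
      [ycode w, scode u', 5 * lam \<alpha> + ycode a, rho \<beta>, 0, 1, 0, 0, 0, 0, 0, 0, 0, 0]"
    using upn_reaches_execute[OF _ assms(2,1)] by (simp add: lam_snoc)
  also have "upn_reaches \<dots> (6 * rho \<beta> + ycode w + 2 * lam \<alpha> + ycode a + 6)
      [ycode a, scode u', lam \<alpha>, 5 * rho \<beta> + ycode w, 1, 0, 0, 0, 0, 0, 0, 0, 0, 0]"
    using upn_reaches_move_left ycode_le_4[of a] by simp
  finally show ?thesis
    by (simp add: tape_vec_def rho_Cons algebra_simps)
qed

lemma upn_reaches_tm_step_right:
  assumes "delta x u = (w, Rgt, u')" and "\<alpha> \<noteq> []"
  shows "upn_reaches (tape_vec u \<alpha> x (b # \<beta>)) (6 * lam \<alpha> + ycode w + 2 * rho \<beta> + ycode b + 7)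
    (tape_vec u' (\<alpha> @ [w]) b \<beta>)"
proof -
  have "upn_reaches (tape_vec u \<alpha> x (b # \<beta>)) 1
      [ycode w, scode u', lam \<alpha>, 5 * rho \<beta> + ycode b, 0, 1, 1, 0, 0, 0, 0, 0, 0, 0]"
    using upn_reaches_execute[OF assms(2) _ assms(1)] by (simp add: rho_Cons add.commute)
  also have "upn_reaches \<dots> (6 * lam \<alpha> + ycode w + 2 * rho \<beta> + ycode b + 6)
      [ycode b, scode u', 5 * lam \<alpha> + ycode w, rho \<beta>, 1, 0, 0, 0, 0, 0, 0, 0, 0, 0]"
    using upn_reaches_move_right ycode_le_4[of b] by simp
  finally show ?thesis
    by (simp add: tape_vec_def lam_snoc algebra_simps)
qed

lemma upn_reaches_expose_blanks:
  assumes "weak_decomp T h \<alpha> x \<beta>"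
  obtains i \<alpha>' \<beta>' where "i \<le> 2" and "\<alpha>' \<noteq> []" and "\<beta>' \<noteq> []"
    and "lam \<alpha>' \<le> lam \<alpha> + 167" and "rho \<beta>' \<le> rho \<beta> + 13596"
    and "weak_decomp T h \<alpha>' x \<beta>'" and "upn_reaches (tape_vec u \<alpha> x \<beta>) i (tape_vec u \<alpha>' x \<beta>')"
proof -
  define \<alpha>' where "\<alpha>' = (if \<alpha> = [] then w_l else \<alpha>)"
  define \<beta>' where "\<beta>' = (if \<beta> = [] then w_r else \<beta>)"
  have nonempty: "\<alpha>' \<noteq> []" "\<beta>' \<noteq> []"
    by (simp_all add: \<alpha>'_def \<beta>'_def w_l_def w_r_def)
  have lam_le: "lam \<alpha>' \<le> lam \<alpha> + 167" and rho_le: "rho \<beta>' \<le> rho \<beta> + 13596"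
    by (simp_all add: \<alpha>'_def \<beta>'_def lam_w_l rho_w_r)
  have decomp: "weak_decomp T h \<alpha>' x \<beta>'"
    using assms by (auto simp: \<alpha>'_def \<beta>'_def intro: weak_decomp_expose_w_l weak_decomp_expose_w_r)
  have "upn_reaches (tape_vec u \<alpha> x \<beta>) (if \<alpha> = [] then 1 else 0) (tape_vec u \<alpha>' x \<beta>)"
    by (simp add: \<alpha>'_def tape_vec_def upn_vec_step_simps lam_w_l)
  also have "upn_reaches \<dots> (if \<beta> = [] then 1 else 0) (tape_vec u \<alpha>' x \<beta>')"
    using nonempty by (simp add: \<beta>'_def tape_vec_def upn_vec_step_simps rho_w_r lam_eq_0_iff)
  finally show thesis
    by (rule that[OF _ nonempty lam_le rho_le decomp, rotated]) simp
qed

lemma upn_simulates_move_left: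
  assumes "weak_decomp T h \<alpha> x \<beta>" and "\<alpha> \<noteq> []" and "\<beta> \<noteq> []" and "delta x u = (w, Lft, u')"
  shows "\<exists>m v'. 0 < m \<and> m \<le> 6 * (lam \<alpha> + rho \<beta>) + 13 \<and> v' ! 2 + v' ! 3 \<le> 5 * (lam \<alpha> + rho \<beta>) + 4
    \<and> upn_reaches (tape_vec u \<alpha> x \<beta>) m v' \<and> vec_represents v' (u', T(h := w), h - 1)"
proof -
  obtain \<alpha>2 a where \<alpha>: "\<alpha> = \<alpha>2 @ [a]"
    using assms(2) by (metis rev_exhaust)
  have "lam \<alpha> = 5 * lam \<alpha>2 + ycode a"
    by (simp add: \<alpha> lam_snoc)
  moreover have "vec_represents (tape_vec u' \<alpha>2 a (w # \<beta>)) (u', T(h := w), h - 1)"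
    using weak_decomp_move_left assms(1) unfolding \<alpha> vec_represents_def by blast
  moreover have "upn_reaches (tape_vec u \<alpha> x \<beta>) (6 * rho \<beta> + ycode w + 2 * lam \<alpha>2 + ycode a + 7)
      (tape_vec u' \<alpha>2 a (w # \<beta>))"
    using upn_reaches_tm_step_left[OF assms(4,3)] by (simp add: \<alpha>)
  ultimately show ?thesis
    using ycode_le_4[of w]
    by (intro exI[of _ "6 * rho \<beta> + ycode w + 2 * lam \<alpha>2 + ycode a + 7"]
      exI[of _ "tape_vec u' \<alpha>2 a (w # \<beta>)"])
      (simp_all add: tape_vec_def rho_Cons)
qed

lemma upn_simulates_move_right:
  assumes "weak_decomp T h \<alpha> x \<beta>" and "\<alpha> \<noteq> []" and "\<beta> \<noteq> []" and "delta x u = (w, Rgt, u')"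
  shows "\<exists>m v'. 0 < m \<and> m \<le> 6 * (lam \<alpha> + rho \<beta>) + 13 \<and> v' ! 2 + v' ! 3 \<le> 5 * (lam \<alpha> + rho \<beta>) + 4
    \<and> upn_reaches (tape_vec u \<alpha> x \<beta>) m v' \<and> vec_represents v' (u', T(h := w), h + 1)"
proof -
  obtain b \<beta>2 where \<beta>: "\<beta> = b # \<beta>2"
    using assms(3) by (metis list.exhaust)
  have "rho \<beta> = ycode b + 5 * rho \<beta>2"
    by (simp add: \<beta> rho_Cons)
  moreover have "vec_represents (tape_vec u' (\<alpha> @ [w]) b \<beta>2) (u', T(h := w), h + 1)"
    using weak_decomp_move_right assms(1) unfolding \<beta> vec_represents_def by blast
  moreover have "upn_reaches (tape_vec u \<alpha> x \<beta>) (6 * lam \<alpha> + ycode w + 2 * rho \<beta>2 + ycode b + 7)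
      (tape_vec u' (\<alpha> @ [w]) b \<beta>2)"
    using upn_reaches_tm_step_right[OF assms(4,2)] by (simp add: \<beta>)
  ultimately show ?thesis
    using ycode_le_4[of w]
    by (intro exI[of _ "6 * lam \<alpha> + ycode w + 2 * rho \<beta>2 + ycode b + 7"]
      exI[of _ "tape_vec u' (\<alpha> @ [w]) b \<beta>2"])
      (simp_all add: tape_vec_def lam_snoc)
qed

(* The constant absorbs the blank words that t1, t2 may insert, so that one machine step multiplies
   the weight by at most 5. *)
definition tape_weight :: "nat list \<Rightarrow> nat" where
  "tape_weight v = v ! 2 + v ! 3 + 20000"

lemma upn_macro_step:
  assumes "vec_represents v C"
  shows "\<exists>m v'. 0 < m \<and> m \<le> 6 * tape_weight v \<and> tape_weight v' \<le> 5 * tape_weight v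
    \<and> upn_reaches v m v' \<and> vec_represents v' (tm_step C)"
proof -
  obtain u T h where C: "C = (u, T, h)"
    by (cases C)
  obtain \<alpha> x \<beta> where decomp: "weak_decomp T h \<alpha> x \<beta>" and v: "v = tape_vec u \<alpha> x \<beta>"
    using assms by (auto simp: vec_represents_def C)
  obtain i \<alpha>' \<beta>' where "i \<le> 2" and "\<alpha>' \<noteq> []" and "\<beta>' \<noteq> []"
    and "lam \<alpha>' \<le> lam \<alpha> + 167" and "rho \<beta>' \<le> rho \<beta> + 13596"
    and decomp': "weak_decomp T h \<alpha>' x \<beta>'" and pad: "upn_reaches v i (tape_vec u \<alpha>' x \<beta>')"
    using upn_reaches_expose_blanks[OF decomp, of u] v by metis
  obtain w d u' where \<delta>: "delta x u = (w, d, u')"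
    by (metis prod_cases3)
  have "T h = x"
    using decomp by (simp add: weak_decomp_def)
  have "\<exists>m v'. 0 < m \<and> m \<le> 6 * (lam \<alpha>' + rho \<beta>') + 13 \<and> v' ! 2 + v' ! 3 \<le> 5 * (lam \<alpha>' + rho \<beta>') + 4
      \<and> upn_reaches (tape_vec u \<alpha>' x \<beta>') m v' \<and> vec_represents v' (tm_step C)"
  proof (cases d)
    case Lft
    then show ?thesis
      using upn_simulates_move_left[OF decomp' \<open>\<alpha>' \<noteq> []\<close> \<open>\<beta>' \<noteq> []\<close>] \<delta> \<open>T h = x\<close> by (simp add: C)
  next
    case Rgt
    then show ?thesis
      using upn_simulates_move_right[OF decomp' \<open>\<alpha>' \<noteq> []\<close> \<open>\<beta>' \<noteq> []\<close>] \<delta> \<open>T h = x\<close> by (simp add: C)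
  qed
  then obtain m v' where "0 < m" and "m \<le> 6 * (lam \<alpha>' + rho \<beta>') + 13"
    and "v' ! 2 + v' ! 3 \<le> 5 * (lam \<alpha>' + rho \<beta>') + 4"
    and "upn_reaches (tape_vec u \<alpha>' x \<beta>') m v'" and "vec_represents v' (tm_step C)"
    by blast
  moreover have "tape_weight v = lam \<alpha> + rho \<beta> + 20000"
    by (simp add: tape_weight_def v tape_vec_def)
  ultimately show ?thesis
    using upn_reaches_trans[OF pad] \<open>i \<le> 2\<close> \<open>lam \<alpha>' \<le> lam \<alpha> + 167\<close> \<open>rho \<beta>' \<le> rho \<beta> + 13596\<close>
    by (intro exI[of _ "i + m"] exI[of _ v']) (simp add: tape_weight_def)
qed

section \<open>Runs of UPN\<close>

lemma upn_run_simulates_tm: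
  assumes "represents M0 C0"
  obtains n where "n 0 = 0" and "strict_mono n"
    and "\<And>k. \<exists>M. dipn_run upn_places UPN M0 (n k) = Some M \<and> represents M ((tm_step ^^ k) C0)"
    and "\<And>k. n k \<le> 6 * tape_weight (token_vec 14 M0) * k * 5 ^ k"
proof -
  have start: "vec_represents (token_vec 14 M0) C0"
    using assms by (simp add: represents_iff_vec_represents)
  obtain n where "n 0 = 0" and "strict_mono n"
    and sim: "\<forall>k. \<exists>v. iter_opt (vec_step upn_arcs) (n k) (token_vec 14 M0) = Some v
      \<and> vec_represents v ((tm_step ^^ k) C0)"
    and time: "\<forall>k. n k \<le> 6 * k * 5 ^ k * tape_weight (token_vec 14 M0)"
    using iter_opt_macro_steps[where g = tm_step, OF start _ upn_macro_step[unfolded upn_reaches_def]]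
    by auto
  moreover have "\<exists>M. dipn_run upn_places UPN M0 (n k) = Some M \<and> represents M ((tm_step ^^ k) C0)" for k
  proof -
    obtain v where run: "iter_opt (vec_step upn_arcs) (n k) (token_vec 14 M0) = Some v"
      and rep: "vec_represents v ((tm_step ^^ k) C0)"
      using sim by blast
    obtain M where "dipn_run upn_places UPN M0 (n k) = Some M" and "token_vec 14 M = v"
      using token_vec_dipn_run_UPN[of M0 "n k"] run by (auto simp: map_option_eq_Some)
    then show ?thesis
      using rep by (auto simp: represents_iff_vec_represents)
  qed
  moreover have "n k \<le> 6 * tape_weight (token_vec 14 M0) * k * 5 ^ k" for k
    using time by (simp add: algebra_simps)
  ultimately show thesis
    using that by blast
qed

lemma digits5_le: "m < 5 ^ d \<Longrightarrow> 0 < d \<Longrightarrow> digits5 m \<le> d"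
proof (induction d arbitrary: m)
  case (Suc d)
  show ?case
  proof (cases "m < 5")
    case False
    then have "0 < d" and "m div 5 < 5 ^ d"
      using Suc.prems(1) by (auto simp: div_less_iff_less_mult mult.commute intro: Nat.gr0I)
    then show ?thesis
      using Suc.IH False by (subst digits5.simps) simp
  qed (subst digits5.simps, simp)
qed simp

lemma digits5_le_linear:
  assumes "1 \<le> k" and "m \<le> A + B * (k * 5 ^ k)"
  shows "digits5 m \<le> (2 + A + B) * k"
proof -
  have "k * 5 ^ k \<le> 5 ^ (2 * k)"
    using less_exp[of k] by (simp add: power_mult_distrib mult_2 power_add less_imp_le)
  then have "B * (k * 5 ^ k) \<le> B * 5 ^ (2 * k)"
    by (rule mult_le_mono2)
  moreover have "A \<le> A * 5 ^ (2 * k)"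
    by simp
  ultimately have "m \<le> A * 5 ^ (2 * k) + B * 5 ^ (2 * k)"
    using assms(2) by linarith
  also have "\<dots> = (A + B) * 5 ^ (2 * k)"
    by (simp add: add_mult_distrib)
  also have "\<dots> < 5 ^ (A + B) * 5 ^ (2 * k)"
    using power_gt_expt[of 5 "A + B"] by simp
  also have "\<dots> = 5 ^ (A + B + 2 * k)"
    by (simp add: power_add)
  finally have "digits5 m \<le> A + B + 2 * k"
    by (rule digits5_le) (use assms(1) in simp)
  also have "\<dots> \<le> 2 * k + (A + B) * k"
    using mult_le_mono2[OF assms(1), of "A + B"] by simp
  also have "\<dots> = (2 + A + B) * k"
    by (simp add: algebra_simps)
  finally show ?thesis .
qed

lemma upn_run_digits5_le:
  assumes "dipn_run upn_places UPN M0 j = Some M" and "p \<in> upn_places"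
    and "1 \<le> k" and "j \<le> c * k * 5 ^ k"
  shows "digits5 (M p) \<le> (2 + (\<Sum>q\<in>upn_places. M0 q) + 13596 * c) * k"
proof (rule digits5_le_linear[OF assms(3)])
  have "M p \<le> M0 p + 13596 * j"
    by (rule dipn_run_le[OF UPN_t_out_le assms(1)])
  moreover have "M0 p \<le> (\<Sum>q\<in>upn_places. M0 q)"
    using assms(2) by (intro member_le_sum) (simp_all add: upn_places_def)
  moreover have "13596 * j \<le> 13596 * c * (k * 5 ^ k)"
    using assms(4) by (simp add: algebra_simps)
  ultimately show "M p \<le> (\<Sum>q\<in>upn_places. M0 q) + 13596 * c * (k * 5 ^ k)"
    by linarith
qed

theorem theorem1:
  fixes C0 :: config and M0 :: marking
  assumes "weak_tape C0"
    and "represents M0 C0"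
  shows "(\<forall>j. dipn_run upn_places UPN M0 j \<noteq> None)
    \<and> (\<exists>n :: nat \<Rightarrow> nat. n 0 = 0 \<and> strict_mono n
        \<and> (\<forall>k. \<exists>M. dipn_run upn_places UPN M0 (n k) = Some M
                  \<and> represents M ((tm_step ^^ k) C0))
        \<and> (\<exists>c::nat. \<forall>k\<ge>1. n k \<le> c * k * 5 ^ k)
        \<and> (\<exists>c::nat. \<forall>k\<ge>1. \<forall>j\<le>n k. \<forall>M. dipn_run upn_places UPN M0 j = Some M
                  \<longrightarrow> (\<forall>p\<in>upn_places. digits5 (M p) \<le> c * k)))"
proof -
  let ?run = "dipn_run upn_places UPN M0"
  obtain n where "n 0 = 0" and mono: "strict_mono n"
    and reps: "\<And>k. \<exists>M. ?run (n k) = Some M \<and> represents M ((tm_step ^^ k) C0)"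
    and time: "\<And>k. n k \<le> 6 * tape_weight (token_vec 14 M0) * k * 5 ^ k"
    using upn_run_simulates_tm[OF assms(2)] by blast
  have "\<forall>j. ?run j \<noteq> None"
  proof (intro allI notI)
    fix j assume "?run j = None"
    then have "?run (n j) = None"
      unfolding dipn_run_eq_iter_opt
      by (rule iter_opt_None_mono) (rule strict_mono_imp_increasing[OF mono])
    then show False
      using reps[of j] by auto
  qed
  moreover have "\<exists>c. \<forall>k\<ge>1. n k \<le> c * k * 5 ^ k"
    using time by blast
  moreover have "\<exists>c. \<forall>k\<ge>1. \<forall>j\<le>n k. \<forall>M. ?run j = Some M
      \<longrightarrow> (\<forall>p\<in>upn_places. digits5 (M p) \<le> c * k)"
    using time by (blast intro: upn_run_digits5_le le_trans)
  ultimately show ?thesis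
    using \<open>n 0 = 0\<close> mono reps by (intro conjI exI[of _ n]) auto
qed

end
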